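(* A hypersemigroup $(H,\circ)$ is intra-regular if and only if for every right ideal $X$, every left ideal $Y$ and every bi-ideal $B$ of $H$ we have $X\cap B\cap Y\subseteq Y*B*X$.
   Context: Let $H$ be a nonempty set and $\mathcal{P}^*(H)$ the set of all nonempty subsets of $H$. A hyperoperation on $H$ is a map $\circ: H\times H\to \mathcal{P}^*(H)$; the pair $(H,\circ)$ is a hypergroupoid. For $A,B\in\mathcal{P}^*(H)$ define $A*B:=\bigcup_{(a,b)\in A\times B}(a\circ b)$. A hypergroupoid is a hypersemigroup if $\{x\}*(y\circ z)=(x\circ y)*\{z\}$ for all $x,y,z\in H$; then $*$ is associative on $\mathcal{P}^*(H)$. A hypersemigroup is intra-regular if for every $a\in H$ there exist $x,y\in H$ with $a\in\{x\}*\{a\}*\{a\}*\{y\}$. A nonempty subset $A$ of $H$ is a left ideal if $H*A\subseteq A$ and a right ideal if $A*H\subseteq A$. A nonempty subset $B$ of $H$ is a bi-ideal if $B*H*B\subseteq B$. *)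

theory Defs
  imports Main
begin

definition hypergroupoid :: "'a set \<Rightarrow> ('a \<Rightarrow> 'a \<Rightarrow> 'a set) \<Rightarrow> bool" where
  "hypergroupoid H op \<longleftrightarrow> H \<noteq> {} \<and>
     (\<forall>x\<in>H. \<forall>y\<in>H. op x y \<noteq> {} \<and> op x y \<subseteq> H)"

definition setmul :: "('a \<Rightarrow> 'a \<Rightarrow> 'a set) \<Rightarrow> 'a set \<Rightarrow> 'a set \<Rightarrow> 'a set" where
  "setmul op A B = (\<Union>(a, b) \<in> A \<times> B. op a b)"

definition hypersemigroup :: "'a set \<Rightarrow> ('a \<Rightarrow> 'a \<Rightarrow> 'a set) \<Rightarrow> bool" where
  "hypersemigroup H op \<longleftrightarrow> hypergroupoid H op \<and>
     (\<forall>x\<in>H. \<forall>y\<in>H. \<forall>z\<in>H. setmul op {x} (op y z) = setmul op (op x y) {z})"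

definition intra_regular :: "'a set \<Rightarrow> ('a \<Rightarrow> 'a \<Rightarrow> 'a set) \<Rightarrow> bool" where
  "intra_regular H op \<longleftrightarrow>
     (\<forall>a\<in>H. \<exists>x\<in>H. \<exists>y\<in>H.
        a \<in> setmul op (setmul op (setmul op {x} {a}) {a}) {y})"

definition left_ideal :: "'a set \<Rightarrow> ('a \<Rightarrow> 'a \<Rightarrow> 'a set) \<Rightarrow> 'a set \<Rightarrow> bool" where
  "left_ideal H op A \<longleftrightarrow> A \<noteq> {} \<and> A \<subseteq> H \<and> setmul op H A \<subseteq> A"

definition right_ideal :: "'a set \<Rightarrow> ('a \<Rightarrow> 'a \<Rightarrow> 'a set) \<Rightarrow> 'a set \<Rightarrow> bool" where
  "right_ideal H op A \<longleftrightarrow> A \<noteq> {} \<and> A \<subseteq> H \<and> setmul op A H \<subseteq> A"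

definition bi_ideal :: "'a set \<Rightarrow> ('a \<Rightarrow> 'a \<Rightarrow> 'a set) \<Rightarrow> 'a set \<Rightarrow> bool" where
  "bi_ideal H op B \<longleftrightarrow> B \<noteq> {} \<and> B \<subseteq> H \<and> setmul op (setmul op B H) B \<subseteq> B"

end

theory Submission
  imports Defs
begin

text \<open>
  Writing \<open>A\<close> for \<open>{a}\<close>, intra-regularity says \<open>A \<subseteq> H*A*A*H\<close>. Substituting this inclusion into
  itself gives \<open>A \<subseteq> (H*A)*(A*H*A)*(A*H)\<close>, and the three factors lie in any left ideal, bi-ideal
  and right ideal containing \<open>a\<close>. Conversely, apply the hypothesis to the left ideal
  \<open>A \<union> H*A\<close> and to the right ideal \<open>R = A \<union> A*H\<close>, used both as right ideal and as bi-ideal: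
  \<open>a \<in> (A \<union> H*A)*R*R \<subseteq> A*A*H \<union> H*A*A*H\<close>, and the first alternative again falls into
  \<open>H*A*A*H\<close> after one more substitution.
\<close>

lemma mem_setmul_iff: "w \<in> setmul op A B \<longleftrightarrow> (\<exists>a\<in>A. \<exists>b\<in>B. w \<in> op a b)"
  unfolding setmul_def by blast

lemma setmul_mono: "A \<subseteq> A' \<Longrightarrow> B \<subseteq> B' \<Longrightarrow> setmul op A B \<subseteq> setmul op A' B'"
  unfolding setmul_def by blast

lemma setmul_Un_left: "setmul op (A \<union> B) C = setmul op A C \<union> setmul op B C"
  unfolding setmul_def by blast

lemma setmul_Un_right: "setmul op C (A \<union> B) = setmul op C A \<union> setmul op C B"
  unfolding setmul_def by blast

lemma setmul_closed:
  "hypergroupoid H op \<Longrightarrow> A \<subseteq> H \<Longrightarrow> B \<subseteq> H \<Longrightarrow> setmul op A B \<subseteq> H"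
  unfolding setmul_def hypergroupoid_def by blast

lemma hypersemigroup_setmul_closed:
  "hypersemigroup H op \<Longrightarrow> A \<subseteq> H \<Longrightarrow> B \<subseteq> H \<Longrightarrow> setmul op A B \<subseteq> H"
  using setmul_closed unfolding hypersemigroup_def by blast

lemma setmul_assoc:
  assumes "hypersemigroup H op" and "A \<subseteq> H" "B \<subseteq> H" "C \<subseteq> H"
  shows "setmul op (setmul op A B) C = setmul op A (setmul op B C)"
proof -
  have assoc: "setmul op (op a b) {c} = setmul op {a} (op b c)" if "a \<in> A" "b \<in> B" "c \<in> C" for a b c
    using assms that unfolding hypersemigroup_def by blast
  have "w \<in> setmul op (setmul op A B) C \<longleftrightarrow> (\<exists>a\<in>A. \<exists>b\<in>B. \<exists>c\<in>C. w \<in> setmul op (op a b) {c})" for w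
    unfolding setmul_def by blast
  also have "\<dots> w \<longleftrightarrow> (\<exists>a\<in>A. \<exists>b\<in>B. \<exists>c\<in>C. w \<in> setmul op {a} (op b c))" for w
    using assoc by blast
  also have "\<dots> w \<longleftrightarrow> w \<in> setmul op A (setmul op B C)" for w
    unfolding setmul_def by blast
  finally show ?thesis by blast
qed

lemma intra_regular_iff:
  "intra_regular H op \<longleftrightarrow> (\<forall>a\<in>H. a \<in> setmul op (setmul op (setmul op H {a}) {a}) H)"
proof -
  have "a \<in> setmul op (setmul op (setmul op H {a}) {a}) H \<longleftrightarrow>
        (\<exists>x\<in>H. \<exists>y\<in>H. a \<in> setmul op (setmul op (setmul op {x} {a}) {a}) {y})" for a
    unfolding mem_setmul_iff Bex_def by blast
  then show ?thesis
    unfolding intra_regular_def by blast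
qed

lemma hypersemigroup_HH_subset: "hypersemigroup H op \<Longrightarrow> setmul op H H \<subseteq> H"
  using hypersemigroup_setmul_closed by blast

lemma subset_HAAH_unfold:
  assumes hs: "hypersemigroup H op" and AH: "A \<subseteq> H"
    and A: "A \<subseteq> setmul op (setmul op (setmul op H A) A) H"
  shows "A \<subseteq> setmul op (setmul op (setmul op H A) (setmul op (setmul op A H) A)) (setmul op A H)"
proof -
  note closed = hypersemigroup_setmul_closed[OF hs]
  note HH = hypersemigroup_HH_subset[OF hs]
  let ?E = "setmul op (setmul op (setmul op H A) A) H"
  have "A \<subseteq> setmul op (setmul op (setmul op H ?E) ?E) H"
    using A by (rule order_trans) (intro setmul_mono A order_refl)
  also have "\<dots> = setmul op (setmul op H H) (setmul op A (setmul op A (setmul op (setmul op H H)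
                    (setmul op A (setmul op A (setmul op H H))))))"
    using AH by (simp add: setmul_assoc[OF hs] closed)
  also have "\<dots> \<subseteq> setmul op H (setmul op A (setmul op A (setmul op H (setmul op A (setmul op A H)))))"
    by (intro setmul_mono HH order_refl)
  also have "\<dots> = setmul op (setmul op (setmul op H A) (setmul op (setmul op A H) A)) (setmul op A H)"
    using AH by (simp add: setmul_assoc[OF hs] closed)
  finally show ?thesis .
qed

lemma subset_AAH_imp_subset_HAAH:
  assumes hs: "hypersemigroup H op" and AH: "A \<subseteq> H"
    and A: "A \<subseteq> setmul op A (setmul op A H)"
  shows "A \<subseteq> setmul op (setmul op (setmul op H A) A) H"
proof -
  note closed = hypersemigroup_setmul_closed[OF hs]
  have "A \<subseteq> setmul op A (setmul op (setmul op A (setmul op A H)) H)"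
    using A by (rule order_trans) (intro setmul_mono A order_refl)
  also have "\<dots> = setmul op A (setmul op A (setmul op A (setmul op H H)))"
    using AH by (simp add: setmul_assoc[OF hs] closed)
  also have "\<dots> \<subseteq> setmul op H (setmul op A (setmul op A H))"
    using AH hypersemigroup_HH_subset[OF hs] by (intro setmul_mono order_refl)
  also have "\<dots> = setmul op (setmul op (setmul op H A) A) H"
    using AH by (simp add: setmul_assoc[OF hs] closed)
  finally show ?thesis .
qed

lemma setmul_right_ideal_hull_H:
  assumes hs: "hypersemigroup H op" and AH: "A \<subseteq> H"
  shows "setmul op (A \<union> setmul op A H) H \<subseteq> setmul op A H"
proof -
  have "setmul op (setmul op A H) H \<subseteq> setmul op A H"
    using AH hypersemigroup_HH_subset[OF hs]
    by (simp add: setmul_assoc[OF hs] setmul_mono)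
  then show ?thesis
    by (simp add: setmul_Un_left)
qed

lemma right_ideal_hull:
  assumes "hypersemigroup H op" and "a \<in> H"
  shows "right_ideal H op ({a} \<union> setmul op {a} H)"
  using assms setmul_right_ideal_hull_H[of H op "{a}"] hypersemigroup_setmul_closed[of H op "{a}" H]
  unfolding right_ideal_def by auto

lemma left_ideal_hull:
  assumes hs: "hypersemigroup H op" and "a \<in> H"
  shows "left_ideal H op ({a} \<union> setmul op H {a})"
proof -
  have "setmul op H (setmul op H {a}) \<subseteq> setmul op H {a}"
    using assms hypersemigroup_HH_subset[OF hs]
    by (simp flip: setmul_assoc[OF hs] add: setmul_mono)
  then show ?thesis
    using assms hypersemigroup_setmul_closed[of H op H "{a}"] setmul_Un_right[of op H "{a}"]
    unfolding left_ideal_def by blast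
qed

lemma right_ideal_imp_bi_ideal:
  assumes hs: "hypersemigroup H op" and R: "right_ideal H op R"
  shows "bi_ideal H op R"
proof -
  have RH: "R \<subseteq> H" and RHR: "setmul op R H \<subseteq> R"
    using R unfolding right_ideal_def by auto
  have "setmul op (setmul op R H) R \<subseteq> setmul op R H"
    using RH RHR by (intro setmul_mono)
  with R RHR show ?thesis
    unfolding right_ideal_def bi_ideal_def by blast
qed

lemma intra_regular_imp_ideal_intersection_subset:
  assumes hs: "hypersemigroup H op" and ir: "intra_regular H op"
    and X: "right_ideal H op X" and Y: "left_ideal H op Y" and B: "bi_ideal H op B"
  shows "X \<inter> B \<inter> Y \<subseteq> setmul op (setmul op Y B) X"
proof
  fix a assume a: "a \<in> X \<inter> B \<inter> Y"
  then have aH: "a \<in> H"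
    using X unfolding right_ideal_def by blast
  then have "{a} \<subseteq> setmul op (setmul op (setmul op H {a}) {a}) H"
    using ir unfolding intra_regular_iff by blast
  then have "{a} \<subseteq> setmul op (setmul op (setmul op H {a}) (setmul op (setmul op {a} H) {a}))
                      (setmul op {a} H)"
    using hs aH by (intro subset_HAAH_unfold) auto
  also have "\<dots> \<subseteq> setmul op (setmul op (setmul op H Y) (setmul op (setmul op B H) B)) (setmul op X H)"
    using a by (intro setmul_mono order_refl) auto
  also have "\<dots> \<subseteq> setmul op (setmul op Y B) X"
    using X Y B unfolding right_ideal_def left_ideal_def bi_ideal_def
    by (intro setmul_mono) auto
  finally show "a \<in> setmul op (setmul op Y B) X" by blast
qed

lemma ideal_intersection_subset_imp_intra_regular:
  assumes hs: "hypersemigroup H op"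
    and cond: "\<And>X Y B. right_ideal H op X \<Longrightarrow> left_ideal H op Y \<Longrightarrow> bi_ideal H op B \<Longrightarrow>
                 X \<inter> B \<inter> Y \<subseteq> setmul op (setmul op Y B) X"
  shows "intra_regular H op"
  unfolding intra_regular_iff
proof
  fix a assume aH: "a \<in> H"
  note closed = hypersemigroup_setmul_closed[OF hs]
  define A where "A = {a}"
  define R where "R = A \<union> setmul op A H"
  define L where "L = A \<union> setmul op H A"
  have AH: "A \<subseteq> H" and RH: "R \<subseteq> H" and LH: "L \<subseteq> H"
    using aH closed unfolding A_def R_def L_def by auto
  have R: "right_ideal H op R" and L: "left_ideal H op L"
    unfolding R_def L_def A_def using right_ideal_hull left_ideal_hull hs aH by auto
  have "a \<in> R \<inter> R \<inter> L"
    unfolding R_def L_def A_def by blast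
  also have "\<dots> \<subseteq> setmul op (setmul op L R) R"
    using cond R L right_ideal_imp_bi_ideal[OF hs R] by blast
  also have "\<dots> = setmul op L (setmul op R R)"
    using LH RH by (simp add: setmul_assoc[OF hs])
  also have "\<dots> \<subseteq> setmul op L (setmul op A H)"
  proof -
    have "setmul op R R \<subseteq> setmul op R H"
      using RH by (rule setmul_mono[OF order_refl])
    also have "\<dots> \<subseteq> setmul op A H"
      unfolding R_def by (rule setmul_right_ideal_hull_H[OF hs AH])
    finally show ?thesis
      by (rule setmul_mono[OF order_refl])
  qed
  also have "\<dots> = setmul op A (setmul op A H) \<union> setmul op (setmul op (setmul op H A) A) H"
    unfolding L_def setmul_Un_left using AH by (simp add: setmul_assoc[OF hs] closed)
  finally have "a \<in> setmul op A (setmul op A H) \<or> a \<in> setmul op (setmul op (setmul op H A) A) H"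
    by blast
  then show "a \<in> setmul op (setmul op (setmul op H {a}) {a}) H"
    using subset_AAH_imp_subset_HAAH[OF hs AH] unfolding A_def by blast
qed

theorem proposition24:
  fixes H :: "'a set" and op :: "'a \<Rightarrow> 'a \<Rightarrow> 'a set"
  assumes "hypersemigroup H op"
  shows "intra_regular H op \<longleftrightarrow>
    (\<forall>X Y B. right_ideal H op X \<longrightarrow> left_ideal H op Y \<longrightarrow> bi_ideal H op B \<longrightarrow>
       X \<inter> B \<inter> Y \<subseteq> setmul op (setmul op Y B) X)"
proof
  assume "intra_regular H op"
  then show "\<forall>X Y B. right_ideal H op X \<longrightarrow> left_ideal H op Y \<longrightarrow> bi_ideal H op B \<longrightarrow>
               X \<inter> B \<inter> Y \<subseteq> setmul op (setmul op Y B) X"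
    using intra_regular_imp_ideal_intersection_subset[OF assms] by blast
next
  assume "\<forall>X Y B. right_ideal H op X \<longrightarrow> left_ideal H op Y \<longrightarrow> bi_ideal H op B \<longrightarrow>
            X \<inter> B \<inter> Y \<subseteq> setmul op (setmul op Y B) X"
  then show "intra_regular H op"
    by (intro ideal_intersection_subset_imp_intra_regular[OF assms]) blast
qed

end
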